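(* Let $\mathcal{P} \subseteq \mathcal{X}$ be a finite point set, let $k \ge 1$ be an integer, let $r \in [0, k-1]$ be an integer and let $\eta \ge 1$. If $\mathrm{OPT}_{k-r}(\mathcal{P}) \le \eta \cdot \mathrm{OPT}_k(\mathcal{P})$, then $\mathrm{OPT}_k(\mathcal{P}) \le 4 \cdot \mathrm{OPT}_{k + \lfloor r/(12\eta) \rfloor}(\mathcal{P})$.
   Context: $(\mathcal{X}, d)$ is a metric space (the ground set) and $\mathcal{P} \subseteq \mathcal{X}$ is finite. For a set $\mathcal{U} \subseteq \mathcal{X}$, $\mathrm{cost}(\mathcal{U},\mathcal{P}) = \sum_{p \in \mathcal{P}} \min_{q \in \mathcal{U}} d(p,q)$. For an integer $t \ge 1$, $\mathrm{OPT}_t(\mathcal{P}) = \min_{\mathcal{U} \subseteq \mathcal{X},\, |\mathcal{U}| \le t} \mathrm{cost}(\mathcal{U},\mathcal{P})$ (the optimal "improper" $t$-median cost, where centers may be any points of $\mathcal{X}$, not necessarily of $\mathcal{P}$). *)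

theory Defs
  imports "HOL-Analysis.Analysis"
begin

definition cost :: "'a::metric_space set \<Rightarrow> 'a set \<Rightarrow> real" where
  "cost U P = (\<Sum>p\<in>P. (INF q\<in>U. dist p q))"

definition OPT :: "nat \<Rightarrow> 'a::metric_space set \<Rightarrow> real" where
  "OPT t P = (INF U\<in>{U. finite U \<and> U \<noteq> {} \<and> card U \<le> t}. cost U P)"

end

theory Submission
  imports Defs
begin

text \<open>
  Take near-optimal centre sets C with k + m centres and S with k - r centres. Send every
  c \<in> C to its nearest point of S and, for each point of S that is hit, keep the closest such
  centre; this keeps a set K of at most k - r centres. If a centre c is deleted, each point p
  served by c can be rerouted to the kept centre attached to the S-point nearest to c, at cost
  at most 3 d(p, C) + 2 d(p, S). At least r + j centres lie outside K, where j = |C| - k \<le> m,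
  so deleting the j of them with the cheapest rerouting costs at most a j/r fraction of
  3 cost(C) + 2 cost(S). This gives
  r OPT(k) \<le> (r + 3m) OPT(k + m) + 2m OPT(k - r),
  and for m = \<lfloor>r / (12\<eta>)\<rfloor> together with OPT(k - r) \<le> \<eta> OPT(k) it yields
  OPT(k) \<le> 3/2 OPT(k + m).
\<close>

lemma cost_eq_sum_infdist:
  fixes U P :: "'a::metric_space set"
  assumes "U \<noteq> {}"
  shows "cost U P = (\<Sum>p\<in>P. infdist p U)"
  using assms by (simp add: cost_def infdist_def)

lemma cost_nonneg:
  fixes U P :: "'a::metric_space set"
  assumes "U \<noteq> {}"
  shows "0 \<le> cost U P"
  using assms by (simp add: cost_eq_sum_infdist sum_nonneg infdist_nonneg)

lemma OPT_candidates_nonempty: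
  assumes "t \<ge> 1"
  shows "{U::'a set. finite U \<and> U \<noteq> {} \<and> card U \<le> t} \<noteq> {}"
proof -
  have "{undefined} \<in> {U::'a set. finite U \<and> U \<noteq> {} \<and> card U \<le> t}"
    using assms by simp
  then show ?thesis by blast
qed

lemma bdd_below_cost:
  fixes P :: "'a::metric_space set"
  shows "bdd_below ((\<lambda>U. cost U P) ` {U. finite U \<and> U \<noteq> {} \<and> card U \<le> t})"
  by (rule bdd_belowI[where m = 0]) (auto intro: cost_nonneg)

lemma OPT_le_cost:
  fixes U P :: "'a::metric_space set"
  assumes "finite U" "U \<noteq> {}" "card U \<le> t"
  shows "OPT t P \<le> cost U P"
  unfolding OPT_def by (rule cINF_lower[OF bdd_below_cost]) (use assms in simp)

lemma OPT_nonneg: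
  fixes P :: "'a::metric_space set"
  assumes "t \<ge> 1"
  shows "0 \<le> OPT t P"
  unfolding OPT_def
  by (rule cINF_greatest[OF OPT_candidates_nonempty[OF assms]]) (auto intro: cost_nonneg)

lemma exists_cost_less_OPT:
  fixes P :: "'a::metric_space set"
  assumes "t \<ge> 1" "e > 0"
  obtains U where "finite U" "U \<noteq> {}" "card U \<le> t" "cost U P < OPT t P + e"
proof -
  have "(INF U\<in>{U::'a set. finite U \<and> U \<noteq> {} \<and> card U \<le> t}. cost U P) < OPT t P + e"
    using assms(2) unfolding OPT_def by simp
  then show ?thesis
    using that cINF_less_iff[OF OPT_candidates_nonempty[OF assms(1)] bdd_below_cost] by auto
qed

lemma nearest_point_function:
  fixes U :: "'a::metric_space set"
  assumes "finite U" "U \<noteq> {}"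
  obtains f where "\<And>x. f x \<in> U \<and> dist x (f x) = infdist x U"
proof -
  have "infdist x U \<in> dist x ` U" for x
    using Min_in[of "dist x ` U"] assms by (simp add: infdist_def cInf_eq_Min)
  then have "\<forall>x. \<exists>q. q \<in> U \<and> dist x q = infdist x U"
    by (metis imageE)
  then show ?thesis
    using that choice[of "\<lambda>x q. q \<in> U \<and> dist x q = infdist x U"] by blast
qed

lemma sum_fibres:
  assumes "finite P" "finite B"
  shows "(\<Sum>c\<in>B. \<Sum>p | p \<in> P \<and> a p = c. h p) = (\<Sum>p | p \<in> P \<and> a p \<in> B. h p)"
proof -
  have "(\<Sum>c\<in>B. \<Sum>p | p \<in> P \<and> a p = c. h p)
      = (\<Sum>c\<in>B. \<Sum>p | p \<in> {p \<in> P. a p \<in> B} \<and> a p = c. h p)"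
    by (rule sum.cong) (auto intro: arg_cong[where f = "sum h"])
  also have "\<dots> = (\<Sum>p | p \<in> P \<and> a p \<in> B. h p)"
    by (rule sum.group) (use assms in auto)
  finally show ?thesis .
qed

lemma exists_subset_sum_le_average:
  fixes f :: "'b \<Rightarrow> real"
  assumes "finite A" "j \<le> card A"
  shows "\<exists>B\<subseteq>A. card B = j \<and> card A * sum f B \<le> j * sum f A"
  using assms
proof (induction "card A - j" arbitrary: A)
  case 0
  then show ?case by (intro exI[of _ A]) auto
next
  case (Suc d)
  show ?case
  proof (cases "j = 0")
    case True
    then show ?thesis by (intro exI[of _ "{}"]) auto
  next
    case False
    have "A \<noteq> {}" using Suc by auto
    then have "Max (f ` A) \<in> f ` A" using Suc.prems(1) by simp
    then obtain a where a: "a \<in> A" "f a = Max (f ` A)" by (metis imageE)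
    have a_max: "f x \<le> f a" if "x \<in> A" for x
      using Suc.prems(1) that by (simp add: a(2))
    define n where "n = card (A - {a})"
    have n: "card A = n + 1" "j \<le> n" "n > 0"
      using Suc a False unfolding n_def by (auto simp: card_Diff_singleton)
    have "\<exists>B\<subseteq>A - {a}. card B = j \<and> n * sum f B \<le> j * sum f (A - {a})"
      unfolding n_def by (rule Suc.hyps(1)) (use Suc n in \<open>simp_all add: n_def\<close>)
    then obtain B where B: "B \<subseteq> A - {a}" "card B = j" "n * sum f B \<le> j * sum f (A - {a})"
      by blast
    have "sum f (A - {a}) \<le> n * f a"
      using sum_bounded_above[of "A - {a}" f "f a"] a_max unfolding n_def by auto
    then have shrink: "(n + 1) * sum f (A - {a}) \<le> n * sum f A"
      using Suc.prems(1) a(1) by (simp add: sum.remove distrib_left distrib_right)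
    have "n * ((n + 1) * sum f B) = (n + 1) * (n * sum f B)"
      by (simp only: mult_ac)
    also have "\<dots> \<le> (n + 1) * (j * sum f (A - {a}))"
      using B(3) by (intro mult_left_mono) auto
    also have "\<dots> = j * ((n + 1) * sum f (A - {a}))"
      by (simp only: mult_ac)
    also have "\<dots> \<le> j * (n * sum f A)"
      using shrink by (intro mult_left_mono) auto
    also have "\<dots> = n * (j * sum f A)"
      by (simp only: mult_ac)
    finally have "(n + 1) * sum f B \<le> j * sum f A"
      using n(3) by simp
    then show ?thesis using B n(1) by (intro exI[of _ B]) auto
  qed
qed

lemma exists_fibrewise_minimisers:
  fixes \<sigma> :: "'a \<Rightarrow> 'b" and w :: "'a \<Rightarrow> 'c::linorder"
  assumes "finite C"
  obtains K where "K \<subseteq> C" "card K \<le> card (\<sigma> ` C)"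
    "\<And>c. c \<in> C \<Longrightarrow> \<exists>c'\<in>K. \<sigma> c' = \<sigma> c \<and> w c' \<le> w c"
proof
  define m where "m s = arg_min_on w {c \<in> C. \<sigma> c = s}" for s
  have m: "m (\<sigma> c) \<in> C \<and> \<sigma> (m (\<sigma> c)) = \<sigma> c \<and> w (m (\<sigma> c)) \<le> w c" if "c \<in> C" for c
    using arg_min_if_finite(1)[of "{c' \<in> C. \<sigma> c' = \<sigma> c}" w]
      arg_min_least[of "{c' \<in> C. \<sigma> c' = \<sigma> c}" c w] assms that
    unfolding m_def by auto
  show "m ` \<sigma> ` C \<subseteq> C" using m by auto
  show "card (m ` \<sigma> ` C) \<le> card (\<sigma> ` C)" using assms by (intro card_image_le) auto
  show "\<exists>c'\<in>m ` \<sigma> ` C. \<sigma> c' = \<sigma> c \<and> w c' \<le> w c" if "c \<in> C" for c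
    using m[OF that] that by blast
qed

lemma dist_reroute_le:
  fixes p c c' s :: "'a::metric_space"
  assumes "dist c s = infdist c S" "dist s c' \<le> dist s c"
  shows "dist p c' \<le> 3 * dist p c + 2 * infdist p S"
proof -
  have "dist p c' \<le> dist p c + dist c s + dist s c'"
    using dist_triangle[of p c' c] dist_triangle[of c c' s] by linarith
  moreover have "dist c s \<le> infdist p S + dist p c"
    using assms(1) infdist_triangle[of c S p] by (simp add: dist_commute)
  ultimately show ?thesis
    using assms(2) by (simp add: dist_commute)
qed

lemma cost_Diff_le_rerouting:
  fixes P C K B S :: "'a::metric_space set" and a :: "'a \<Rightarrow> 'a"
  assumes "finite P" "finite C" "K \<noteq> {}" "K \<subseteq> C" "B \<subseteq> C - K"
    and nearest: "\<And>p. a p \<in> C \<and> dist p (a p) = infdist p C"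
    and substitute: "\<And>c. c \<in> C \<Longrightarrow> \<exists>c'\<in>K. \<exists>s. dist c s = infdist c S \<and> dist s c' \<le> dist s c"
  shows "cost (C - B) P
    \<le> cost C P + (\<Sum>c\<in>B. \<Sum>p | p \<in> P \<and> a p = c. 3 * infdist p C + 2 * infdist p S)"
proof -
  define h where "h p = 3 * infdist p C + 2 * infdist p S" for p
  have "C - B \<noteq> {}" "C \<noteq> {}" using assms(3-5) by auto
  have pointwise: "infdist p (C - B) \<le> infdist p C + (if a p \<in> B then h p else 0)" for p
  proof (cases "a p \<in> B")
    case False
    then have "infdist p (C - B) \<le> dist p (a p)" using nearest by (intro infdist_le) auto
    then show ?thesis using False nearest by simp
  next
    case True
    obtain c' s where "c' \<in> K" "dist (a p) s = infdist (a p) S" "dist s c' \<le> dist s (a p)"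
      using substitute nearest by blast
    then have "infdist p (C - B) \<le> dist p c'"
      using assms(4,5) by (intro infdist_le) auto
    also have "dist p c' \<le> h p"
      using dist_reroute_le[of "a p" s S c' p] nearest[of p] \<open>dist (a p) s = _\<close> \<open>dist s c' \<le> _\<close>
      by (simp add: h_def)
    finally show ?thesis using True infdist_nonneg[of p C] by simp
  qed
  have "cost (C - B) P \<le> (\<Sum>p\<in>P. infdist p C + (if a p \<in> B then h p else 0))"
    unfolding cost_eq_sum_infdist[OF \<open>C - B \<noteq> {}\<close>] by (intro sum_mono pointwise)
  also have "\<dots> = cost C P + (\<Sum>p | p \<in> P \<and> a p \<in> B. h p)"
    using assms(1) by (simp add: cost_eq_sum_infdist[OF \<open>C \<noteq> {}\<close>] sum.distrib sum.inter_filter)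
  also have "(\<Sum>p | p \<in> P \<and> a p \<in> B. h p) = (\<Sum>c\<in>B. \<Sum>p | p \<in> P \<and> a p = c. h p)"
    using assms(1,2,5) finite_subset by (intro sum_fibres[symmetric]) auto
  finally show ?thesis unfolding h_def .
qed

lemma exists_kept_centres:
  fixes C S :: "'a::metric_space set"
  assumes "finite C" "finite S" "S \<noteq> {}"
  obtains K where "K \<subseteq> C" "card K \<le> card S"
    "\<And>c. c \<in> C \<Longrightarrow> \<exists>c'\<in>K. \<exists>s. dist c s = infdist c S \<and> dist s c' \<le> dist s c"
proof -
  obtain \<sigma> where \<sigma>: "\<And>c. \<sigma> c \<in> S \<and> dist c (\<sigma> c) = infdist c S"
    using nearest_point_function[OF assms(2,3)] by blast
  obtain K where K: "K \<subseteq> C" "card K \<le> card (\<sigma> ` C)"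
    "\<And>c. c \<in> C \<Longrightarrow> \<exists>c'\<in>K. \<sigma> c' = \<sigma> c \<and> dist (\<sigma> c') c' \<le> dist (\<sigma> c) c"
    using exists_fibrewise_minimisers[OF assms(1), of \<sigma> "\<lambda>c. dist (\<sigma> c) c"] by blast
  have "card (\<sigma> ` C) \<le> card S"
    using \<sigma> assms(2) by (intro card_mono) auto
  moreover have "\<exists>c'\<in>K. \<exists>s. dist c s = infdist c S \<and> dist s c' \<le> dist s c" if c: "c \<in> C" for c
  proof -
    obtain c' where "c' \<in> K" "\<sigma> c' = \<sigma> c" "dist (\<sigma> c') c' \<le> dist (\<sigma> c) c"
      using K(3)[OF c] by blast
    then show ?thesis using \<sigma>[of c] by (intro bexI[of _ c'] exI[of _ "\<sigma> c"]) auto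
  qed
  ultimately show ?thesis using that K(1,2) by (meson order_trans)
qed

lemma OPT_reduce_centers:
  fixes P C S :: "'a::metric_space set"
  assumes "finite P" "finite C" "C \<noteq> {}" "finite S" "S \<noteq> {}"
    and "card C \<le> k + m" "card S + r \<le> k"
  shows "r * OPT k P \<le> r * cost C P + m * (3 * cost C P + 2 * cost S P)"
proof (cases "card C \<le> k")
  case True
  have "r * OPT k P \<le> r * cost C P"
    using OPT_le_cost[OF assms(2,3) True] by (intro mult_left_mono) auto
  moreover have "0 \<le> m * (3 * cost C P + 2 * cost S P)"
    using cost_nonneg[OF assms(3)] cost_nonneg[OF assms(5)] by simp
  ultimately show ?thesis by linarith
next
  case False
  define j where "j = card C - k"
  obtain a where a: "\<And>p. a p \<in> C \<and> dist p (a p) = infdist p C"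
    using nearest_point_function[OF assms(2,3)] by blast
  obtain K where K: "K \<subseteq> C" "card K \<le> card S"
    and substitute: "\<And>c. c \<in> C \<Longrightarrow> \<exists>c'\<in>K. \<exists>s. dist c s = infdist c S \<and> dist s c' \<le> dist s c"
    using exists_kept_centres[OF assms(2,4,5)] by blast
  have "K \<noteq> {}" using substitute assms(3) by blast
  have card_R: "j + r \<le> card (C - K)"
    using K assms(2,7) False by (simp add: card_Diff_subset finite_subset j_def)
  define g where "g c = (\<Sum>p | p \<in> P \<and> a p = c. 3 * infdist p C + 2 * infdist p S)" for c
  have g_nonneg: "0 \<le> g c" for c
    unfolding g_def by (intro sum_nonneg) (simp add: infdist_nonneg)
  obtain B where B: "B \<subseteq> C - K" "card B = j" "card (C - K) * sum g B \<le> j * sum g (C - K)"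
    using exists_subset_sum_le_average[of "C - K" j g] card_R assms(2) by auto
  have "B \<subseteq> C" using B(1) by blast
  then have "card (C - B) = k"
    using B(2) assms(2) False by (simp add: card_Diff_subset finite_subset j_def)
  moreover have "C - B \<noteq> {}" using B(1) K(1) \<open>K \<noteq> {}\<close> by blast
  ultimately have "OPT k P \<le> cost (C - B) P"
    using assms(2) by (intro OPT_le_cost) auto
  also have "\<dots> \<le> cost C P + sum g B"
    using cost_Diff_le_rerouting[OF assms(1,2) \<open>K \<noteq> {}\<close> K(1) B(1) a substitute] unfolding g_def .
  finally have "r * OPT k P \<le> r * (cost C P + sum g B)"
    by (intro mult_left_mono) auto
  have "sum g (C - K) \<le> sum g C"
    using assms(2) g_nonneg by (intro sum_mono2) auto
  also have "\<dots> = (\<Sum>p\<in>P. 3 * infdist p C + 2 * infdist p S)"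
    using sum_fibres[OF assms(1,2), where a = a] a unfolding g_def by simp
  also have "\<dots> = 3 * cost C P + 2 * cost S P"
    using assms(3,5) by (simp add: cost_eq_sum_infdist sum.distrib sum_distrib_left)
  finally have total: "sum g (C - K) \<le> 3 * cost C P + 2 * cost S P" .
  have "r * sum g B \<le> card (C - K) * sum g B"
    using card_R g_nonneg by (intro mult_right_mono sum_nonneg) auto
  also have "\<dots> \<le> j * sum g (C - K)" by (rule B(3))
  also have "\<dots> \<le> m * (3 * cost C P + 2 * cost S P)"
    using total g_nonneg assms(6) by (intro mult_mono sum_nonneg) (auto simp: j_def)
  finally show ?thesis
    using \<open>r * OPT k P \<le> r * (cost C P + sum g B)\<close> by (simp add: distrib_left)
qed

lemma OPT_tradeoff:
  fixes P :: "'a::metric_space set"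
  assumes "finite P" "r < k"
  shows "r * OPT k P \<le> (real r + 3 * real m) * OPT (k + m) P + 2 * real m * OPT (k - r) P"
proof (rule field_le_epsilon)
  fix e :: real
  assume "0 < e"
  define \<delta> where "\<delta> = e / (real r + 5 * real m + 1)"
  have "0 < \<delta>" using \<open>0 < e\<close> by (simp add: \<delta>_def)
  have \<delta>_small: "(real r + 5 * real m) * \<delta> \<le> e"
    using \<open>0 < e\<close> by (simp add: \<delta>_def field_simps)
  have "1 \<le> k + m" "1 \<le> k - r" using assms(2) by auto
  obtain C where C: "finite C" "C \<noteq> {}" "card C \<le> k + m" "cost C P < OPT (k + m) P + \<delta>"
    using exists_cost_less_OPT[OF \<open>1 \<le> k + m\<close> \<open>0 < \<delta>\<close>] by blast
  obtain S where S: "finite S" "S \<noteq> {}" "card S \<le> k - r" "cost S P < OPT (k - r) P + \<delta>"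
    using exists_cost_less_OPT[OF \<open>1 \<le> k - r\<close> \<open>0 < \<delta>\<close>] by blast
  have "r * OPT k P \<le> r * cost C P + m * (3 * cost C P + 2 * cost S P)"
    using OPT_reduce_centers[OF assms(1) C(1,2) S(1,2) C(3)] S(3) assms(2) by simp
  also have "\<dots> = (real r + 3 * real m) * cost C P + 2 * real m * cost S P"
    by (simp add: algebra_simps)
  also have "\<dots> \<le> (real r + 3 * real m) * (OPT (k + m) P + \<delta>) + 2 * real m * (OPT (k - r) P + \<delta>)"
    using C(4) S(4) by (intro add_mono mult_left_mono) auto
  also have "\<dots> \<le> (real r + 3 * real m) * OPT (k + m) P + 2 * real m * OPT (k - r) P + e"
    using \<delta>_small by (simp add: algebra_simps)
  finally show "r * OPT k P \<le> (real r + 3 * real m) * OPT (k + m) P + 2 * real m * OPT (k - r) P + e" .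
qed

lemma OPT_le_three_halves:
  fixes P :: "'a::metric_space set" and \<eta> :: real
  assumes "finite P" "0 < r" "r < k" "\<eta> \<ge> 1" "12 * \<eta> * m \<le> r"
    and "OPT (k - r) P \<le> \<eta> * OPT k P"
  shows "OPT k P \<le> 3 / 2 * OPT (k + m) P"
proof -
  have X: "0 \<le> OPT k P" and Y: "0 \<le> OPT (k + m) P"
    using assms(3) by (auto intro: OPT_nonneg)
  have "r * OPT k P \<le> (real r + 3 * real m) * OPT (k + m) P + 2 * real m * OPT (k - r) P"
    using OPT_tradeoff[OF assms(1,3)] .
  also have "2 * real m * OPT (k - r) P \<le> r / 6 * OPT k P"
  proof -
    have "2 * real m * OPT (k - r) P \<le> 2 * real m * (\<eta> * OPT k P)"
      using assms(6) by (intro mult_left_mono) auto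
    also have "\<dots> = (2 * real m * \<eta>) * OPT k P"
      by (simp add: algebra_simps)
    also have "\<dots> \<le> r / 6 * OPT k P"
      using assms(5) X by (intro mult_right_mono) (simp_all add: field_simps)
    finally show ?thesis .
  qed
  also have "(real r + 3 * real m) * OPT (k + m) P \<le> 5 / 4 * r * OPT (k + m) P"
    using assms(5) mult_right_mono[OF assms(4), of "real m"] Y by (intro mult_right_mono) auto
  finally have "r * (OPT k P - 3 / 2 * OPT (k + m) P) \<le> 0"
    by (simp add: algebra_simps)
  then show ?thesis
    using assms(2) by (simp add: mult_le_0_iff)
qed

theorem lemma4p1:
  fixes P :: "'a::metric_space set" and k r :: nat and \<eta> :: real
  assumes "finite P" and "k \<ge> 1" and "r \<le> k - 1" and "\<eta> \<ge> 1"
    and "OPT (k - r) P \<le> \<eta> * OPT k P"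
  shows "OPT k P \<le> 4 * OPT (k + nat \<lfloor>real r / (12 * \<eta>)\<rfloor>) P"
proof (cases "r = 0")
  case True
  then show ?thesis
    using OPT_nonneg[OF assms(2), of P] by simp
next
  case False
  define m where "m = nat \<lfloor>real r / (12 * \<eta>)\<rfloor>"
  have "m \<le> real r / (12 * \<eta>)"
    using assms(4) by (simp add: m_def)
  then have "12 * \<eta> * m \<le> r"
    using assms(4) by (simp add: field_simps)
  then have "OPT k P \<le> 3 / 2 * OPT (k + m) P"
    using OPT_le_three_halves[OF assms(1) _ _ assms(4) _ assms(5)] False assms(2,3) by simp
  moreover have "0 \<le> OPT (k + m) P"
    using assms(2) by (intro OPT_nonneg) simp
  ultimately show ?thesis
    unfolding m_def by linarith
qed

end
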